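(* Let $V$ be a finite vocabulary. Each word $x\in V$ has a synonym set $S_x\subseteq V$ with $x\in S_x$, and the synonym relation is symmetric ($x'\in S_x$ iff $x\in S_{x'}$). Each word $x\in V$ has a nonempty perturbation set $P_x\subseteq V$. Fix integers $L\ge 1$ and $0\le R\le L$, a finite label set $\mathcal{Y}$, and a classifier $f: V^L\to\mathcal{Y}$. For a sentence $X=x_1,\ldots,x_L\in V^L$ let $$S_X=\Big\{X'=x'_1,\ldots,x'_L\in V^L:\ \textstyle\sum_{i=1}^L \mathbb{I}\{x'_i\neq x_i\}\le R,\ x'_i\in S_{x_i}\ \forall i\Big\},$$ let $\Pi_X$ be the probability distribution on $V^L$ given by $\Pi_X(Z)=\prod_{i=1}^L \mathbb{I}\{z_i\in P_{x_i}\}/|P_{x_i}|$ for $Z=z_1,\ldots,z_L$, and let $g^{\mathrm{RS}}(X,c)=\mathbb{P}_{Z\sim\Pi_X}(f(Z)=c)$ for $c\in\mathcal{Y}$. Assume $|P_x|=|P_{x'}|$ for every word $x$ and every synonym $x'\in S_x$. Define, for each word $x$, $q_x=\min_{x'\in S_x}|P_x\cap P_{x'}|/|P_x|$. For a given sentence $X=x_1,\ldots,x_L$, order its positions as $i_1,\ldots,i_L$ so that $q_{x_{i_1}}\le q_{x_{i_2}}\le\cdots\le q_{x_{i_L}}$, and set $q_X:=1-\prod_{j=1}^R q_{x_{i_j}}$. Then for every label $c\in\mathcal{Y}$, $$\min_{X'\in S_X} g^{\mathrm{RS}}(X',c)\ge \max\big(g^{\mathrm{RS}}(X,c)-q_X,\,0\big),\qquad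 \max_{X'\in S_X} g^{\mathrm{RS}}(X',c)\le \min\big(g^{\mathrm{RS}}(X,c)+q_X,\,1\big).$$ Equivalently, $|g^{\mathrm{RS}}(X',c)-g^{\mathrm{RS}}(X,c)|\le q_X$ for all $X'\in S_X$ and all $c\in\mathcal{Y}$.
   Context: $g^{\mathrm{RS}}(X,c)$ is the "soft score" of label $c$ of the smoothed classifier $f^{\mathrm{RS}}(X)=\arg\max_{c\in\mathcal{Y}} g^{\mathrm{RS}}(X,c)$. $S_X$ is the set of adversarial sentences obtained by replacing at most $R$ words of $X$ by synonyms. *)

theory Defs
  imports Complex_Main
begin

definition sentences :: "'w set \<Rightarrow> nat \<Rightarrow> 'w list set" where
  "sentences V L = {Z. length Z = L \<and> set Z \<subseteq> V}"

definition adv_set :: "'w set \<Rightarrow> ('w \<Rightarrow> 'w set) \<Rightarrow> nat \<Rightarrow> 'w list \<Rightarrow> 'w list set" where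
  "adv_set V Syn R X = {X'. X' \<in> sentences V (length X)
      \<and> card {i. i < length X \<and> X' ! i \<noteq> X ! i} \<le> R
      \<and> (\<forall>i<length X. X' ! i \<in> Syn (X ! i))}"

definition Pi_dist :: "('w \<Rightarrow> 'w set) \<Rightarrow> 'w list \<Rightarrow> 'w list \<Rightarrow> real" where
  "Pi_dist P X Z = (\<Prod>i<length X. (if Z ! i \<in> P (X ! i) then 1 else 0) / real (card (P (X ! i))))"

definition gRS :: "'w set \<Rightarrow> ('w \<Rightarrow> 'w set) \<Rightarrow> ('w list \<Rightarrow> 'y) \<Rightarrow> 'w list \<Rightarrow> 'y \<Rightarrow> real" where
  "gRS V P f X c = (\<Sum>Z\<in>sentences V (length X). if f Z = c then Pi_dist P X Z else 0)"

definition q_word :: "('w \<Rightarrow> 'w set) \<Rightarrow> ('w \<Rightarrow> 'w set) \<Rightarrow> 'w \<Rightarrow> real" where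
  "q_word Syn P x = Min ((\<lambda>x'. real (card (P x \<inter> P x')) / real (card (P x))) ` Syn x)"

definition q_sent :: "('w \<Rightarrow> 'w set) \<Rightarrow> ('w \<Rightarrow> 'w set) \<Rightarrow> nat \<Rightarrow> 'w list \<Rightarrow> real" where
  "q_sent Syn P R X = 1 - prod_list (take R (sort (map (q_word Syn P) X)))"

end

theory Submission
  imports Defs "HOL-Library.Multiset"
begin

text \<open>
  Let \<omega> be the total mass of the pointwise minimum of \<Pi>_X and \<Pi>_X'. No event, in particular
  f Z = c, changes probability by more than 1 - \<omega> between the two. Both are products of uniform
  distributions on sets of equal size, so the minimum is again a product, and \<omega> is the product over
  all positions i of |P x_i \<inter> P x'_i| / |P x_i|. Unchanged positions contribute 1 and each of the at
  most R changed ones at least q x_i; since all q x lie in [0, 1], the product is at least that of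
  the R smallest values q x_i, that is, 1 - \<omega> \<le> q_X.
\<close>

lemma sentences_Suc:
  "sentences V (Suc n) = (\<lambda>(v, Z). v # Z) ` (V \<times> sentences V n)"
  by (fastforce simp: sentences_def length_Suc_conv image_def)

lemma finite_sentences: "finite V \<Longrightarrow> finite (sentences V n)"
  using finite_lists_length_eq[of V n] by (simp add: sentences_def conj_commute)

lemma sum_sentences_prod:
  fixes h :: "nat \<Rightarrow> 'w \<Rightarrow> 'a::comm_semiring_1"
  assumes "finite V"
  shows "(\<Sum>Z\<in>sentences V n. \<Prod>i<n. h i (Z ! i)) = (\<Prod>i<n. \<Sum>v\<in>V. h i v)"
proof (induction n arbitrary: h)
  case 0
  have "sentences V 0 = {[]}" by (auto simp: sentences_def)
  then show ?case by simp
next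
  case (Suc n)
  have inj: "inj_on (\<lambda>(v, Z). v # Z) (V \<times> sentences V n)" by (auto simp: inj_on_def)
  have "(\<Sum>Z\<in>sentences V (Suc n). \<Prod>i<Suc n. h i (Z ! i))
      = (\<Sum>(v, Z)\<in>V \<times> sentences V n. \<Prod>i<Suc n. h i ((v # Z) ! i))"
    unfolding sentences_Suc by (subst sum.reindex[OF inj]) (simp add: case_prod_unfold)
  also have "\<dots> = (\<Sum>v\<in>V. \<Sum>Z\<in>sentences V n. h 0 v * (\<Prod>i<n. h (Suc i) (Z ! i)))"
    by (simp add: sum.cartesian_product prod.lessThan_Suc_shift del: prod.lessThan_Suc)
  also have "\<dots> = (\<Sum>v\<in>V. h 0 v) * (\<Prod>i<n. \<Sum>v\<in>V. h (Suc i) v)"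
    by (simp add: sum_product Suc.IH[of "\<lambda>i. h (Suc i)", symmetric])
  also have "\<dots> = (\<Prod>i<Suc n. \<Sum>v\<in>V. h i v)"
    by (simp only: prod.lessThan_Suc_shift)
  finally show ?case .
qed

lemma sum_sentences_prod_indicator:
  fixes k :: "nat \<Rightarrow> real"
  assumes "finite V" and "\<And>i. i < n \<Longrightarrow> A i \<subseteq> V"
  shows "(\<Sum>Z\<in>sentences V n. \<Prod>i<n. (if Z ! i \<in> A i then 1 else 0) / k i)
       = (\<Prod>i<n. real (card (A i)) / k i)"
proof -
  have "(\<Sum>v\<in>V. (if v \<in> A i then 1 else 0) / k i) = real (card (A i)) / k i" if "i < n" for i
    using assms that by (simp add: sum_divide_distrib[symmetric] sum.If_cases Int_absorb1)
  then show ?thesis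
    using sum_sentences_prod[OF assms(1), of "\<lambda>i v. (if v \<in> A i then 1 else 0) / k i" n] by simp
qed

lemma finite_adv_set: "finite V \<Longrightarrow> finite (adv_set V Syn R X)"
  by (rule finite_subset[OF _ finite_sentences]) (auto simp: adv_set_def)

lemma self_in_adv_set:
  assumes "set X \<subseteq> V" and "\<forall>x\<in>V. x \<in> Syn x"
  shows "X \<in> adv_set V Syn R X"
  using assms by (auto simp: adv_set_def sentences_def dest!: nth_mem)

lemma prob_diff_le_one_minus_common_mass:
  fixes p p' m :: "'a \<Rightarrow> real"
  assumes "sum p S = 1" and "\<And>Z. Z \<in> S \<Longrightarrow> m Z \<le> p Z" and "\<And>Z. Z \<in> S \<Longrightarrow> m Z \<le> p' Z"
  shows "(\<Sum>Z\<in>S. if E Z then p Z else 0) - (\<Sum>Z\<in>S. if E Z then p' Z else 0) \<le> 1 - sum m S"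
proof -
  have "(\<Sum>Z\<in>S. if E Z then p Z else 0) - (\<Sum>Z\<in>S. if E Z then p' Z else 0)
      = (\<Sum>Z\<in>S. (if E Z then p Z else 0) - (if E Z then p' Z else 0))"
    by (simp add: sum_subtractf)
  also have "\<dots> \<le> (\<Sum>Z\<in>S. p Z - m Z)"
    by (rule sum_mono) (use assms in auto)
  also have "\<dots> = 1 - sum m S"
    using assms(1) by (simp add: sum_subtractf)
  finally show ?thesis .
qed

lemma Pi_dist_nonneg: "0 \<le> Pi_dist P X Z"
  by (simp add: Pi_dist_def prod_nonneg)

lemma sum_Pi_dist:
  assumes "finite V" and "set X \<subseteq> V" and "\<forall>x\<in>V. P x \<subseteq> V" and "\<forall>x\<in>V. P x \<noteq> {}"
  shows "(\<Sum>Z\<in>sentences V (length X). Pi_dist P X Z) = 1"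
proof -
  have "P (X ! i) \<subseteq> V" and "card (P (X ! i)) > 0" if "i < length X" for i
    using assms that by (auto simp: card_gt_0_iff dest!: nth_mem intro: finite_subset)
  then show ?thesis
    by (auto simp: Pi_dist_def sum_sentences_prod_indicator[OF assms(1)] intro!: prod.neutral)
qed

lemma gRS_bounds:
  assumes "finite V" and "set X \<subseteq> V" and "\<forall>x\<in>V. P x \<subseteq> V" and "\<forall>x\<in>V. P x \<noteq> {}"
  shows "0 \<le> gRS V P f X c \<and> gRS V P f X c \<le> 1"
proof -
  have "gRS V P f X c \<le> (\<Sum>Z\<in>sentences V (length X). Pi_dist P X Z)"
    unfolding gRS_def by (rule sum_mono) (simp add: Pi_dist_nonneg)
  then show ?thesis
    using sum_Pi_dist[OF assms] by (simp add: gRS_def sum_nonneg Pi_dist_nonneg)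
qed

lemma abs_gRS_diff_le_one_minus_overlap:
  assumes "finite V" and "set X \<subseteq> V" and "set X' \<subseteq> V" and "length X' = length X"
    and "\<forall>x\<in>V. P x \<subseteq> V" and "\<forall>x\<in>V. P x \<noteq> {}"
    and card_eq: "\<And>i. i < length X \<Longrightarrow> card (P (X' ! i)) = card (P (X ! i))"
  shows "\<bar>gRS V P f X' c - gRS V P f X c\<bar>
           \<le> 1 - (\<Prod>i<length X. real (card (P (X ! i) \<inter> P (X' ! i))) / real (card (P (X ! i))))"
proof -
  define S where "S = sentences V (length X)"
  \<comment> \<open>the pointwise minimum of \<Pi>_X and \<Pi>_X', as the denominators agree by \<open>card_eq\<close>\<close>
  define m where "m Z = (\<Prod>i<length X. (if Z ! i \<in> P (X ! i) \<inter> P (X' ! i) then 1 else 0)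
                                          / real (card (P (X ! i))))" for Z
  have m_le: "m Z \<le> Pi_dist P X Z" "m Z \<le> Pi_dist P X' Z" for Z
    unfolding m_def Pi_dist_def using card_eq \<open>length X' = length X\<close>
    by (auto intro!: prod_mono divide_right_mono)
  have "sum m S = (\<Prod>i<length X. real (card (P (X ! i) \<inter> P (X' ! i))) / real (card (P (X ! i))))"
    unfolding m_def S_def using assms by (intro sum_sentences_prod_indicator) (auto dest!: nth_mem)
  moreover have "gRS V P f Y c = (\<Sum>Z\<in>S. if f Z = c then Pi_dist P Y Z else 0)"
    if "length Y = length X" for Y
    using that by (simp add: gRS_def S_def)
  moreover have "sum (Pi_dist P Y) S = 1" if "Y \<in> {X, X'}" for Y
    using that sum_Pi_dist[of V Y P] assms by (auto simp: S_def)
  ultimately show ?thesis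
    using prob_diff_le_one_minus_common_mass[of "Pi_dist P X" S m "Pi_dist P X'" "\<lambda>Z. f Z = c"]
      prob_diff_le_one_minus_common_mass[of "Pi_dist P X'" S m "Pi_dist P X" "\<lambda>Z. f Z = c"]
      m_le \<open>length X' = length X\<close>
    by (simp add: abs_le_iff)
qed

lemma prod_list_le_one:
  fixes ys :: "'a::linordered_idom list"
  assumes "\<forall>y\<in>set ys. 0 \<le> y \<and> y \<le> 1"
  shows "prod_list ys \<le> 1"
  using assms by (induction ys) (auto intro: mult_le_one prod_list_nonneg)

lemma prod_list_take_sorted_le_prod_mset:
  fixes ys :: "'a::linordered_idom list"
  assumes "sorted ys" and "\<forall>y\<in>set ys. 0 \<le> y \<and> y \<le> 1"
    and "M \<subseteq># mset ys" and "size M \<le> R"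
  shows "prod_list (take R ys) \<le> prod_mset M"
  using assms
proof (induction ys arbitrary: M R)
  case Nil
  then show ?case by simp
next
  case (Cons a ys)
  have ys01: "\<forall>y\<in>set ys. 0 \<le> y \<and> y \<le> 1" and a01: "0 \<le> a" "a \<le> 1"
    using Cons.prems(2) by auto
  have take_bounds: "0 \<le> prod_list (take R' ys)" "prod_list (take R' ys) \<le> 1" for R'
    using ys01 by (auto dest!: in_set_takeD intro: prod_list_nonneg prod_list_le_one)
  show ?case
  proof (cases "M = {#}")
    case True
    then show ?thesis
      using take_bounds a01 by (cases R) (auto intro: mult_le_one)
  next
    case False
    then obtain R' where R: "R = Suc R'"
      using Cons.prems(4) by (cases R) auto
    obtain m where m: "m \<in># M" "a \<le> m" "M - {#m#} \<subseteq># mset ys"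
    proof (cases "a \<in># M")
      case True
      then show ?thesis
        using Cons.prems(3) that[of a] by (simp add: subset_eq_diff_conv)
    next
      case False
      with Cons.prems(3) have "M \<subseteq># mset ys"
        by (simp add: inter_add_left1 subset_mset.inf.absorb_iff2)
      moreover obtain m where "m \<in># M"
        using \<open>M \<noteq> {#}\<close> by blast
      ultimately have "a \<le> m" and "M - {#m#} \<subseteq># mset ys"
        using Cons.prems(1) mset_subset_eqD[of M "mset ys" m]
        by (auto intro: subset_mset.order_trans[OF diff_subset_eq_self])
      then show ?thesis
        using that \<open>m \<in># M\<close> by blast
    qed
    have "prod_list (take R' ys) \<le> prod_mset (M - {#m#})"
      using Cons.IH[of "M - {#m#}" R'] Cons.prems R m by (simp add: size_Diff_submset)
    then have "a * prod_list (take R' ys) \<le> m * prod_mset (M - {#m#})"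
      using m(2) a01 take_bounds by (intro mult_mono) auto
    then show ?thesis
      using m(1) R by (simp add: prod_mset.remove[of m M])
  qed
qed

lemma prod_take_sort_le_prod_subset:
  fixes xs :: "'a::linordered_idom list"
  assumes "\<forall>x\<in>set xs. 0 \<le> x \<and> x \<le> 1" and "D \<subseteq> {..<length xs}" and "card D \<le> R"
  shows "prod_list (take R (sort xs)) \<le> (\<Prod>i\<in>D. xs ! i)"
proof -
  have "image_mset (nth xs) (mset_set D) \<subseteq># image_mset (nth xs) (mset_set {..<length xs})"
    using assms(2) by (intro image_mset_subseteq_mono subset_imp_msubset_mset_set) auto
  also have "\<dots> = mset (sort xs)"
    by (metis map_nth mset_map mset_set_upto_eq_mset_upto mset_sort)
  finally have "prod_list (take R (sort xs)) \<le> prod_mset (image_mset (nth xs) (mset_set D))"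
    using assms by (intro prod_list_take_sorted_le_prod_mset) auto
  then show ?thesis
    by (simp add: prod_unfold_prod_mset)
qed

lemma q_word_le_overlap:
  assumes "finite (Syn x)" and "x' \<in> Syn x"
  shows "q_word Syn P x \<le> real (card (P x \<inter> P x')) / real (card (P x))"
  unfolding q_word_def using assms by (intro Min_le) auto

lemma q_word_bounds:
  assumes "finite (Syn x)" and "x \<in> Syn x" and "finite (P x)" and "P x \<noteq> {}"
  shows "0 \<le> q_word Syn P x \<and> q_word Syn P x \<le> 1"
proof
  show "0 \<le> q_word Syn P x"
    unfolding q_word_def using assms(1,2) by (subst Min_ge_iff) auto
  show "q_word Syn P x \<le> 1"
    using q_word_le_overlap[of Syn x x P] assms(1,2) assms(3,4) by simp
qed

lemma one_minus_overlap_le_q_sent: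
  assumes "finite V" and "\<forall>x\<in>V. Syn x \<subseteq> V" and "\<forall>x\<in>V. x \<in> Syn x"
    and "\<forall>x\<in>V. P x \<subseteq> V" and "\<forall>x\<in>V. P x \<noteq> {}"
    and "set X \<subseteq> V" and "X' \<in> adv_set V Syn R X"
  shows "1 - (\<Prod>i<length X. real (card (P (X ! i) \<inter> P (X' ! i))) / real (card (P (X ! i))))
           \<le> q_sent Syn P R X"
proof -
  define overlap where "overlap i = real (card (P (X ! i) \<inter> P (X' ! i))) / real (card (P (X ! i)))" for i
  define D where "D = {i. i < length X \<and> X' ! i \<noteq> X ! i}"
  have syn: "\<And>i. i < length X \<Longrightarrow> X' ! i \<in> Syn (X ! i)" and "card D \<le> R"
    using assms(7) by (auto simp: adv_set_def D_def)
  have word: "X ! i \<in> V" "finite (Syn (X ! i))" "finite (P (X ! i))" "P (X ! i) \<noteq> {}" "X ! i \<in> Syn (X ! i)"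
    if "i < length X" for i
  proof -
    have "X ! i \<in> V" using assms(6) that by (auto dest: nth_mem)
    then show "X ! i \<in> V" "finite (Syn (X ! i))" "finite (P (X ! i))" "P (X ! i) \<noteq> {}" "X ! i \<in> Syn (X ! i)"
      using assms(2-5) by (auto intro: rev_finite_subset[OF assms(1)])
  qed
  have q01: "0 \<le> q_word Syn P (X ! i) \<and> q_word Syn P (X ! i) \<le> 1" if "i < length X" for i
    using word[OF that] by (intro q_word_bounds)
  have "(\<Prod>i<length X. overlap i) = (\<Prod>i\<in>D. overlap i)"
    using word by (intro prod.mono_neutral_right) (auto simp: D_def overlap_def)
  moreover have "(\<Prod>i\<in>D. q_word Syn P (X ! i)) \<le> (\<Prod>i\<in>D. overlap i)"
  proof (rule prod_mono)
    fix i assume "i \<in> D"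
    then have "i < length X" by (simp add: D_def)
    then show "0 \<le> q_word Syn P (X ! i) \<and> q_word Syn P (X ! i) \<le> overlap i"
      using q01 q_word_le_overlap[of Syn "X ! i" "X' ! i" P] word syn
      by (simp add: overlap_def)
  qed
  moreover have "prod_list (take R (sort (map (q_word Syn P) X))) \<le> (\<Prod>i\<in>D. q_word Syn P (X ! i))"
  proof -
    have "\<forall>y\<in>set (map (q_word Syn P) X). 0 \<le> y \<and> y \<le> 1"
      using q01 by (auto simp: in_set_conv_nth)
    then have "prod_list (take R (sort (map (q_word Syn P) X))) \<le> (\<Prod>i\<in>D. map (q_word Syn P) X ! i)"
      using \<open>card D \<le> R\<close> by (intro prod_take_sort_le_prod_subset) (auto simp: D_def)
    then show ?thesis
      by (simp add: D_def)
  qed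
  ultimately show ?thesis
    unfolding q_sent_def overlap_def by linarith
qed

lemma abs_gRS_diff_le_q_sent:
  assumes "finite V" and "\<forall>x\<in>V. Syn x \<subseteq> V" and "\<forall>x\<in>V. x \<in> Syn x"
    and "\<forall>x\<in>V. P x \<subseteq> V" and "\<forall>x\<in>V. P x \<noteq> {}"
    and "\<forall>x\<in>V. \<forall>x'\<in>Syn x. card (P x) = card (P x')"
    and "set X \<subseteq> V" and "X' \<in> adv_set V Syn R X"
  shows "\<bar>gRS V P f X' c - gRS V P f X c\<bar> \<le> q_sent Syn P R X"
proof -
  have "set X' \<subseteq> V" and "length X' = length X" and "\<forall>i<length X. X' ! i \<in> Syn (X ! i)"
    using assms(8) by (auto simp: adv_set_def sentences_def)
  then have "card (P (X' ! i)) = card (P (X ! i))" if "i < length X" for i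
    using assms(6,7) that by (metis nth_mem subsetD)
  then have "\<bar>gRS V P f X' c - gRS V P f X c\<bar>
      \<le> 1 - (\<Prod>i<length X. real (card (P (X ! i) \<inter> P (X' ! i))) / real (card (P (X ! i))))"
    using \<open>set X' \<subseteq> V\<close> \<open>length X' = length X\<close> assms
    by (intro abs_gRS_diff_le_one_minus_overlap) auto
  also have "\<dots> \<le> q_sent Syn P R X"
    using assms by (intro one_minus_overlap_le_q_sent) auto
  finally show ?thesis .
qed

theorem theorem1:
  fixes V :: "'w set" and Syn P :: "'w \<Rightarrow> 'w set"
    and L R :: nat and Y :: "'y set" and f :: "'w list \<Rightarrow> 'y"
    and X :: "'w list" and c :: 'y
  assumes finV: "finite V"
    and Syn_sub: "\<forall>x\<in>V. Syn x \<subseteq> V"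
    and Syn_refl: "\<forall>x\<in>V. x \<in> Syn x"
    and Syn_sym: "\<forall>x\<in>V. \<forall>x'\<in>V. x' \<in> Syn x \<longleftrightarrow> x \<in> Syn x'"
    and P_sub: "\<forall>x\<in>V. P x \<subseteq> V"
    and P_ne: "\<forall>x\<in>V. P x \<noteq> {}"
    and L: "L \<ge> 1" and RL: "R \<le> L"
    and finY: "finite Y"
    and f_range: "\<forall>Z\<in>sentences V L. f Z \<in> Y"
    and P_card: "\<forall>x\<in>V. \<forall>x'\<in>Syn x. card (P x) = card (P x')"
    and X: "X \<in> sentences V L"
    and c: "c \<in> Y"
  shows "Min ((\<lambda>X'. gRS V P f X' c) ` adv_set V Syn R X)
           \<ge> max (gRS V P f X c - q_sent Syn P R X) 0
       \<and> Max ((\<lambda>X'. gRS V P f X' c) ` adv_set V Syn R X)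
           \<le> min (gRS V P f X c + q_sent Syn P R X) 1"
proof -
  let ?g = "\<lambda>X'. gRS V P f X' c"
  have "set X \<subseteq> V" using X by (simp add: sentences_def)
  have bounds: "?g X - q_sent Syn P R X \<le> ?g X' \<and> ?g X' \<le> ?g X + q_sent Syn P R X
                  \<and> 0 \<le> ?g X' \<and> ?g X' \<le> 1" if "X' \<in> adv_set V Syn R X" for X'
  proof -
    have "set X' \<subseteq> V" using that by (simp add: adv_set_def sentences_def)
    then show ?thesis
      using abs_gRS_diff_le_q_sent[OF finV Syn_sub Syn_refl P_sub P_ne P_card \<open>set X \<subseteq> V\<close> that,
          where f = f and c = c]
        gRS_bounds[OF finV _ P_sub P_ne, where f = f and c = c]
      by (auto simp: abs_le_iff)
  qed
  have "finite (?g ` adv_set V Syn R X)"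
    by (simp add: finite_adv_set[OF finV])
  moreover have "?g ` adv_set V Syn R X \<noteq> {}"
    using self_in_adv_set[OF \<open>set X \<subseteq> V\<close> Syn_refl] by blast
  ultimately show ?thesis
    using bounds by (simp add: Min_ge_iff Max_le_iff)
qed

end
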